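(* Let $M\ge 0$, $k\ge 1$ and $m\ge 0$ be integers. Let $\mathcal{P}_M(k,m)$ be the set of partitions $\pi=(\lambda_1,\dots,\lambda_M)$ into exactly $M$ parts with smallest part $\lambda_M\ge k$ and $\lambda_i-\lambda_{i+1}\ge m$ for $1\le i\le M-1$ (for $M=0$, $\mathcal{P}_0(k,m)$ consists only of the empty partition). For $\pi\in\mathcal{P}_M(k,m)$ define \[\omega_{k,m}(\pi):=(\lambda_M+1-k)\prod_{i=1}^{M-1}(\lambda_i-\lambda_{i+1}+1-m),\] with $\omega_{k,m}$ of the empty partition equal to $1$. Then \[\sum_{\pi\in\mathcal{P}_M(k,m)}\omega_{k,m}(\pi)\,q^{|\pi|}=\frac{q^{m\binom{M}{2}+kM}}{(q;q)_M^2}.\]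
   Context: A partition is a finite weakly decreasing sequence of positive integers; $|\pi|$ is the sum of its parts. $(a;q)_L=\prod_{n=0}^{L-1}(1-aq^n)$. *)

theory Defs
  imports "HOL-Computational_Algebra.Formal_Power_Series"
begin

definition qpoch :: "'a::comm_ring_1 \<Rightarrow> 'a \<Rightarrow> nat \<Rightarrow> 'a" where
  "qpoch a q L = (\<Prod>n<L. 1 - a * q ^ n)"

text \<open>Partitions are lists of parts in weakly decreasing order (lambda_1, ..., lambda_M).
  P_M(k,m): exactly M positive parts, smallest part >= k, consecutive gaps >= m.\<close>
definition partsP :: "nat \<Rightarrow> nat \<Rightarrow> nat \<Rightarrow> nat list set" where
  "partsP M k m = {xs. length xs = M \<and> (\<forall>x\<in>set xs. 0 < x)
      \<and> (\<forall>i. Suc i < M \<longrightarrow> xs ! (Suc i) \<le> xs ! i \<and> xs ! i - xs ! (Suc i) \<ge> m)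
      \<and> (0 < M \<longrightarrow> xs ! (M - 1) \<ge> k)}"

definition omega :: "nat \<Rightarrow> nat \<Rightarrow> nat list \<Rightarrow> nat" where
  "omega k m xs = (if xs = [] then 1 else
     (last xs + 1 - k) * (\<Prod>i<length xs - 1. xs ! i - xs ! (Suc i) + 1 - m))"

definition genfun :: "nat \<Rightarrow> nat \<Rightarrow> nat \<Rightarrow> rat fps" where
  "genfun M k m = Abs_fps (\<lambda>n. of_nat (\<Sum>xs\<in>{xs\<in>partsP M k m. sum_list xs = n}. omega k m xs))"

end

theory Submission
  imports Defs
begin

text \<open>Let \<open>G\<^sub>M(k)\<close> be the generating function weighted by \<open>\<omega>\<^sub>k\<^sub>,\<^sub>m\<close> and \<open>H\<^sub>M(k)\<close> the one
  weighted by the gap product alone, i.e. \<open>\<omega>\<^sub>k\<^sub>,\<^sub>m\<close> without its factor \<open>\<lambda>\<^sub>M + 1 - k\<close>.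
  Adding 1 to every part gives \<open>G\<^sub>M(k+1) = q\<^sup>M G\<^sub>M(k)\<close> and \<open>H\<^sub>M(k+1) = q\<^sup>M H\<^sub>M(k)\<close>;
  separating the partitions whose smallest part is exactly \<open>k\<close> gives
  \<open>G\<^sub>M(k) = G\<^sub>M(k+1) + H\<^sub>M(k)\<close> and \<open>H\<^sub>M(k) = H\<^sub>M(k+1) + q\<^sup>k G\<^sub>M\<^sub>-\<^sub>1(k+m)\<close>.
  Hence \<open>(1 - q\<^sup>M)\<^sup>2 G\<^sub>M(k) = q\<^sup>k G\<^sub>M\<^sub>-\<^sub>1(k+m)\<close>, and the product formula follows by
  induction on \<open>M\<close>.\<close>

unbundle fps_syntax

lemma partsP_iff:
  "xs \<in> partsP M k m \<longleftrightarrow>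
     length xs = M \<and> (\<forall>x\<in>set xs. 0 < x) \<and> successively (\<lambda>x y. y + m \<le> x) xs
     \<and> (xs \<noteq> [] \<longrightarrow> k \<le> last xs)"
proof -
  have "(xs ! Suc i \<le> xs ! i \<and> m \<le> xs ! i - xs ! Suc i) \<longleftrightarrow> xs ! Suc i + m \<le> xs ! i" for i
    by linarith
  then show ?thesis
    by (cases xs rule: rev_cases) (auto simp: partsP_def successively_conv_nth last_conv_nth)
qed

lemma partsP_0: "partsP 0 k m = {[]}"
  by (auto simp: partsP_iff)

lemma snoc_in_partsP_iff:
  assumes "k \<ge> 1"
  shows "ys @ [a] \<in> partsP (Suc N) k m \<longleftrightarrow> k \<le> a \<and> ys \<in> partsP N (a + m) m"
  using assms by (auto simp: partsP_iff successively_append_iff)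

lemma partsP_Suc_bound_iff:
  "xs \<in> partsP M (Suc k) m \<longleftrightarrow> xs \<in> partsP M k m \<and> (xs \<noteq> [] \<longrightarrow> k \<noteq> last xs)"
  by (auto simp: partsP_iff)

lemma partsP_last_le:
  assumes "xs \<in> partsP M k m" "x \<in> set xs"
  shows "last xs \<le> x"
proof -
  have "transp (\<lambda>x y. y + m \<le> (x::nat))"
    by (auto intro: transpI)
  then have "sorted_wrt (\<lambda>x y. y + m \<le> x) xs"
    using assms(1) by (simp add: partsP_iff flip: successively_conv_sorted_wrt)
  then show ?thesis
    using assms(2) by (induction xs) (auto, meson last_in_set le_add1 order_trans)
qed

lemma map_Suc_in_partsP_iff:
  assumes "k \<ge> 1"
  shows "map Suc xs \<in> partsP M (Suc k) m \<longleftrightarrow> xs \<in> partsP M k m"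
proof -
  have "0 < x" if shifted: "map Suc xs \<in> partsP M (Suc k) m" and "x \<in> set xs" for x
    using assms partsP_last_le[OF shifted, of "Suc x"] shifted \<open>x \<in> set xs\<close>
    by (auto simp: partsP_iff)
  then show ?thesis by (auto simp: partsP_iff last_map successively_map)
qed

lemma finite_partsP_sum: "finite {xs. xs \<in> partsP M k m \<and> sum_list xs = n}"
proof (rule finite_subset)
  show "{xs. xs \<in> partsP M k m \<and> sum_list xs = n} \<subseteq> {xs. set xs \<subseteq> {..n} \<and> length xs = M}"
    by (auto simp: partsP_iff member_le_sum_list)
qed (rule finite_lists_length_eq, simp)

definition partition_genfun :: "(nat list \<Rightarrow> nat) \<Rightarrow> nat \<Rightarrow> nat \<Rightarrow> nat \<Rightarrow> 'a::comm_semiring_1 fps" where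
  "partition_genfun w M k m =
     Abs_fps (\<lambda>n. of_nat (\<Sum>xs | xs \<in> partsP M k m \<and> sum_list xs = n. w xs))"

lemma genfun_eq_partition_genfun: "genfun M k m = partition_genfun (omega k m) M k m"
  by (simp add: genfun_def partition_genfun_def)

lemma partition_genfun_cong:
  assumes "\<And>xs. xs \<in> partsP M k m \<Longrightarrow> w xs = v xs"
  shows "partition_genfun w M k m = partition_genfun v M k m"
  unfolding partition_genfun_def using assms by (intro arg_cong[where f = Abs_fps] ext) simp

lemma partition_genfun_add:
  "partition_genfun (\<lambda>xs. w xs + v xs) M k m = partition_genfun w M k m + partition_genfun v M k m"
  by (rule fps_ext) (simp add: partition_genfun_def sum.distrib)

lemma partition_genfun_zero: "partition_genfun (\<lambda>_. 0) M k m = 0"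
  by (rule fps_ext) (simp add: partition_genfun_def)

lemma fps_X_power_mult_partition_genfun_nth:
  "(fps_X ^ d * partition_genfun w M k m) $ n =
     of_nat (\<Sum>xs | xs \<in> partsP M k m \<and> sum_list xs + d = n. w xs)"
proof (cases "d \<le> n")
  case True
  then have "{xs. xs \<in> partsP M k m \<and> sum_list xs + d = n} = {xs. xs \<in> partsP M k m \<and> sum_list xs = n - d}"
    by auto
  with True show ?thesis by (simp add: fps_X_power_mult_nth partition_genfun_def)
qed (simp add: fps_X_power_mult_nth)

lemma partsP_Suc_eq_image:
  assumes "k \<ge> 1"
  shows "partsP M (Suc k) m = map Suc ` partsP M k m"
proof -
  have "xs \<in> range (map Suc)" if "xs \<in> partsP M (Suc k) m" for xs
  proof -
    have "\<forall>x\<in>set xs. \<exists>y. x = Suc y"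
      using that by (auto simp: partsP_iff not0_implies_Suc)
    then show ?thesis by (auto simp: ex_map_conv[symmetric])
  qed
  then show ?thesis using map_Suc_in_partsP_iff[OF assms] by blast
qed

lemma partition_genfun_shift:
  assumes "k \<ge> 1" "\<And>ys. w (map Suc ys) = v ys"
  shows "partition_genfun w M (Suc k) m = fps_X ^ M * partition_genfun v M k m"
proof (rule fps_ext)
  fix n
  have "sum_list (map Suc ys) = sum_list ys + M" if "ys \<in> partsP M k m" for ys
    using that sum_list_Suc[of "\<lambda>x. x" ys] by (simp add: partsP_iff)
  then have "{xs. xs \<in> partsP M (Suc k) m \<and> sum_list xs = n} =
      map Suc ` {ys. ys \<in> partsP M k m \<and> sum_list ys + M = n}"
    unfolding partsP_Suc_eq_image[OF assms(1)] by auto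
  moreover have "inj_on (map Suc) A" for A by (intro inj_onI) simp
  ultimately show "partition_genfun w M (Suc k) m $ n = (fps_X ^ M * partition_genfun v M k m) $ n"
    unfolding fps_X_power_mult_partition_genfun_nth
    by (simp add: partition_genfun_def sum.reindex assms(2))
qed

lemma partsP_Suc_last_eq:
  assumes "k \<ge> 1"
  shows "{xs \<in> partsP (Suc N) k m. last xs = k} = (\<lambda>ys. ys @ [k]) ` partsP N (k + m) m"
proof -
  have "xs \<in> (\<lambda>ys. ys @ [k]) ` partsP N (k + m) m"
    if "xs \<in> partsP (Suc N) k m" "last xs = k" for xs
  proof
    have "xs \<noteq> []" using that(1) by (auto simp: partsP_iff)
    then show "xs = butlast xs @ [k]" using that(2) by (metis append_butlast_last_id)
    then show "butlast xs \<in> partsP N (k + m) m"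
      using that(1) snoc_in_partsP_iff[OF assms] by metis
  qed
  then show ?thesis using snoc_in_partsP_iff[OF assms] by auto
qed

lemma partition_genfun_split_last:
  assumes "k \<ge> 1"
  shows "partition_genfun w (Suc N) k m =
    partition_genfun w (Suc N) (Suc k) m + fps_X ^ k * partition_genfun (\<lambda>ys. w (ys @ [k])) N (k + m) m"
proof (rule fps_ext)
  fix n
  let ?S = "\<lambda>k. {xs. xs \<in> partsP (Suc N) k m \<and> sum_list xs = n}"
  let ?T = "{ys. ys \<in> partsP N (k + m) m \<and> sum_list ys + k = n}"
  have "?S k = ?S (Suc k) \<union> {xs. xs \<in> {xs \<in> partsP (Suc N) k m. last xs = k} \<and> sum_list xs = n}"
    by (auto simp: partsP_Suc_bound_iff)
  also have "\<dots> = ?S (Suc k) \<union> (\<lambda>ys. ys @ [k]) ` ?T"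
    unfolding partsP_Suc_last_eq[OF assms] by auto
  finally have split: "?S k = ?S (Suc k) \<union> (\<lambda>ys. ys @ [k]) ` ?T" .
  moreover have "finite ((\<lambda>ys. ys @ [k]) ` ?T)"
    using finite_partsP_sum[of "Suc N" k m n] by (rule finite_subset[rotated]) (use split in blast)
  moreover have "?S (Suc k) \<inter> (\<lambda>ys. ys @ [k]) ` ?T = {}"
    by (auto simp: partsP_Suc_bound_iff)
  moreover have "inj_on (\<lambda>ys. ys @ [k]) ?T" by (intro inj_onI) simp
  ultimately show "partition_genfun w (Suc N) k m $ n =
    (partition_genfun w (Suc N) (Suc k) m + fps_X ^ k * partition_genfun (\<lambda>ys. w (ys @ [k])) N (k + m) m) $ n"
    unfolding fps_add_nth fps_X_power_mult_partition_genfun_nth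
    by (simp add: partition_genfun_def sum.union_disjoint finite_partsP_sum sum.reindex)
qed

definition gap_weight :: "nat \<Rightarrow> nat list \<Rightarrow> nat" where
  "gap_weight m xs = (\<Prod>i<length xs - 1. xs ! i - xs ! Suc i + 1 - m)"

lemma omega_eq_gap_weight: "xs \<noteq> [] \<Longrightarrow> omega k m xs = (last xs + 1 - k) * gap_weight m xs"
  by (simp add: omega_def gap_weight_def)

lemma gap_weight_map_Suc: "gap_weight m (map Suc xs) = gap_weight m xs"
  by (simp add: gap_weight_def)

lemma omega_Suc_map_Suc: "omega (Suc k) m (map Suc xs) = omega k m xs"
  by (cases "xs = []") (simp_all add: omega_def omega_eq_gap_weight gap_weight_map_Suc last_map)

lemma gap_weight_snoc:
  assumes "ys \<in> partsP N (a + m) m"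
  shows "gap_weight m (ys @ [a]) = omega (a + m) m ys"
proof (cases ys rule: rev_cases)
  case (snoc zs b)
  with assms have "a + m \<le> b" by (simp add: partsP_iff)
  with snoc show ?thesis
    by (simp add: omega_eq_gap_weight gap_weight_def nth_append, intro prod.cong) auto
qed (simp add: omega_def gap_weight_def)

lemma one_minus_mult_eq:
  fixes a b x :: "'a::comm_ring_1"
  assumes "a = x * a + b"
  shows "(1 - x) * a = b"
  using assms by (simp add: algebra_simps)

lemma omega_genfun_recurrence:
  assumes "k \<ge> 1"
  shows "(1 - fps_X ^ Suc N) * partition_genfun (omega k m) (Suc N) k m =
    (partition_genfun (gap_weight m) (Suc N) k m :: 'a::comm_ring_1 fps)"
proof (rule one_minus_mult_eq)
  have "partition_genfun (omega k m) (Suc N) k m =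
      (partition_genfun (\<lambda>xs. omega (Suc k) m xs + gap_weight m xs) (Suc N) k m :: 'a fps)"
  proof (rule partition_genfun_cong)
    fix xs assume "xs \<in> partsP (Suc N) k m"
    then have "xs \<noteq> []" "k \<le> last xs" by (auto simp: partsP_iff)
    then show "omega k m xs = omega (Suc k) m xs + gap_weight m xs"
      by (simp add: omega_eq_gap_weight Suc_diff_le)
  qed
  also have "\<dots> = partition_genfun (omega (Suc k) m) (Suc N) k m + partition_genfun (gap_weight m) (Suc N) k m"
    by (rule partition_genfun_add)
  also have "partition_genfun (omega (Suc k) m) (Suc N) k m =
      (partition_genfun (omega (Suc k) m) (Suc N) (Suc k) m :: 'a fps)"
  proof -
    have "(\<lambda>ys. omega (Suc k) m (ys @ [k])) = (\<lambda>_. 0)"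
      by (simp add: omega_def)
    then show ?thesis
      using partition_genfun_split_last[OF assms, of "omega (Suc k) m" N m]
      by (simp add: partition_genfun_zero)
  qed
  also have "\<dots> = fps_X ^ Suc N * partition_genfun (omega k m) (Suc N) k m"
    using assms omega_Suc_map_Suc by (rule partition_genfun_shift)
  finally show "partition_genfun (omega k m) (Suc N) k m =
      fps_X ^ Suc N * partition_genfun (omega k m) (Suc N) k m + (partition_genfun (gap_weight m) (Suc N) k m :: 'a fps)" .
qed

lemma gap_weight_genfun_recurrence:
  assumes "k \<ge> 1"
  shows "(1 - fps_X ^ Suc N) * partition_genfun (gap_weight m) (Suc N) k m =
    (fps_X ^ k * partition_genfun (omega (k + m) m) N (k + m) m :: 'a::comm_ring_1 fps)"
proof (rule one_minus_mult_eq)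
  have "partition_genfun (gap_weight m) (Suc N) k m =
      partition_genfun (gap_weight m) (Suc N) (Suc k) m +
      fps_X ^ k * (partition_genfun (\<lambda>ys. gap_weight m (ys @ [k])) N (k + m) m :: 'a fps)"
    by (rule partition_genfun_split_last[OF assms])
  also have "partition_genfun (\<lambda>ys. gap_weight m (ys @ [k])) N (k + m) m =
      (partition_genfun (omega (k + m) m) N (k + m) m :: 'a fps)"
    by (intro partition_genfun_cong gap_weight_snoc)
  also have "partition_genfun (gap_weight m) (Suc N) (Suc k) m =
      fps_X ^ Suc N * (partition_genfun (gap_weight m) (Suc N) k m :: 'a fps)"
    using assms gap_weight_map_Suc by (rule partition_genfun_shift)
  finally show "partition_genfun (gap_weight m) (Suc N) k m =
      fps_X ^ Suc N * partition_genfun (gap_weight m) (Suc N) k m +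
      (fps_X ^ k * partition_genfun (omega (k + m) m) N (k + m) m :: 'a fps)" .
qed

lemma partition_genfun_omega_mult_qpoch:
  assumes "k \<ge> 1"
  shows "partition_genfun (omega k m) M k m * qpoch fps_X fps_X M ^ 2 =
    (fps_X ^ (m * (M choose 2) + k * M) :: 'a::comm_ring_1 fps)"
  using assms
proof (induction M arbitrary: k)
  case 0
  have "{xs. xs \<in> partsP 0 k m \<and> sum_list xs = n} = (if n = 0 then {[]} else {})" for n
    by (auto simp: partsP_0)
  then have "partition_genfun (omega k m) 0 k m = (1 :: 'a fps)"
    by (intro fps_ext) (simp add: partition_genfun_def omega_def)
  then show ?case by (simp add: qpoch_def numeral_2_eq_2)
next
  case (Suc N)
  have qpoch_Suc: "qpoch fps_X fps_X (Suc N) = (1 - fps_X ^ Suc N) * (qpoch fps_X fps_X N :: 'a fps)"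
    by (simp add: qpoch_def)
  have exponent: "m * (Suc N choose 2) + k * Suc N = k + (m * (N choose 2) + (k + m) * N)"
    by (simp add: numeral_2_eq_2 algebra_simps)
  have "partition_genfun (omega k m) (Suc N) k m * qpoch fps_X fps_X (Suc N) ^ 2 =
      (1 - fps_X ^ Suc N) * ((1 - fps_X ^ Suc N) * partition_genfun (omega k m) (Suc N) k m) *
      (qpoch fps_X fps_X N ^ 2 :: 'a fps)"
    unfolding qpoch_Suc by (simp add: power2_eq_square mult_ac)
  also have "\<dots> = fps_X ^ k * (partition_genfun (omega (k + m) m) N (k + m) m * qpoch fps_X fps_X N ^ 2)"
    unfolding omega_genfun_recurrence[OF Suc.prems] gap_weight_genfun_recurrence[OF Suc.prems]
    by (simp add: mult.assoc)
  also have "\<dots> = fps_X ^ k * fps_X ^ (m * (N choose 2) + (k + m) * N)"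
    using Suc by simp
  also have "\<dots> = fps_X ^ (m * (Suc N choose 2) + k * Suc N)"
    unfolding exponent by (simp add: power_add)
  finally show ?case .
qed

lemma qpoch_fps_X_nonzero: "qpoch (fps_X :: 'a::idom fps) fps_X M \<noteq> 0"
proof -
  have "(1 - fps_X * fps_X ^ n :: 'a fps) \<noteq> 0" for n
  proof
    assume "(1 - fps_X * fps_X ^ n :: 'a fps) = 0"
    then have "(1 - fps_X * fps_X ^ n :: 'a fps) $ 0 = 0" by simp
    then show False by simp
  qed
  then show ?thesis by (simp add: qpoch_def)
qed

theorem theorem5:
  fixes M k m :: nat
  assumes "k \<ge> 1"
  shows "genfun M k m =
    fps_X ^ (m * (M choose 2) + k * M) / (qpoch (fps_X :: rat fps) fps_X M) ^ 2"
proof -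
  have "(qpoch fps_X fps_X M) ^ 2 \<noteq> (0 :: rat fps)"
    using qpoch_fps_X_nonzero by simp
  then show ?thesis
    unfolding genfun_eq_partition_genfun partition_genfun_omega_mult_qpoch[OF assms, symmetric]
    by simp
qed

end
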